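(* Let $D\ge1$, let $Q_D$ be the $D$-dimensional hypercube on $X=\{0,1\}^D$ with adjacency matrix $A$, and let $B$ be a symmetric $A$-like matrix. Then: (i) $B_{xx}=B_{yy}$ for all $x,y\in X$; (ii) if $x,z\in X$ satisfy $\partial(x,z)=2$ and $y,w$ are the two vertices adjacent to both $x$ and $z$, then $B_{xy}=B_{zw}$ and $B_{yz}=B_{wx}$.
   Context: $Q_D$ is the graph with vertex set $X=\{0,1\}^D$, two vertices adjacent iff they differ in exactly one coordinate; $\partial$ is the path-length distance (equal to the number of coordinates in which two vertices differ). Matrices are real with rows and columns indexed by $X$. A matrix $B$ is $A$-like if $BA=AB$ and $B_{xy}=0$ for all $x,y\in X$ that are neither equal nor adjacent. *)

theory Defs
  imports Complex_Main
begin

text \<open>Vertices of Q_D: bool lists of length D (elements of {0,1}^D).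
  Matrices indexed by X: functions X => X => real (values outside X irrelevant).\<close>

definition cube :: "nat \<Rightarrow> bool list set" where
  "cube D = {xs. length xs = D}"

text \<open>Path-length distance on Q_D = Hamming distance.\<close>
definition hdist :: "bool list \<Rightarrow> bool list \<Rightarrow> nat" where
  "hdist x y = card {i. i < length x \<and> x ! i \<noteq> y ! i}"

definition adj :: "nat \<Rightarrow> bool list \<Rightarrow> bool list \<Rightarrow> bool" where
  "adj D x y \<longleftrightarrow> x \<in> cube D \<and> y \<in> cube D \<and> hdist x y = 1"

definition adjmat :: "nat \<Rightarrow> bool list \<Rightarrow> bool list \<Rightarrow> real" where
  "adjmat D x y = (if adj D x y then 1 else 0)"

definition mat_mult :: "nat \<Rightarrow> (bool list \<Rightarrow> bool list \<Rightarrow> real) \<Rightarrow> (bool list \<Rightarrow> bool list \<Rightarrow> real)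
    \<Rightarrow> bool list \<Rightarrow> bool list \<Rightarrow> real" where
  "mat_mult D M N x y = (\<Sum>z\<in>cube D. M x z * N z y)"

definition A_like :: "nat \<Rightarrow> (bool list \<Rightarrow> bool list \<Rightarrow> real) \<Rightarrow> bool" where
  "A_like D B \<longleftrightarrow>
     (\<forall>x\<in>cube D. \<forall>y\<in>cube D. mat_mult D B (adjmat D) x y = mat_mult D (adjmat D) B x y) \<and>
     (\<forall>x\<in>cube D. \<forall>y\<in>cube D. x \<noteq> y \<and> \<not> adj D x y \<longrightarrow> B x y = 0)"

definition sym_mat :: "nat \<Rightarrow> (bool list \<Rightarrow> bool list \<Rightarrow> real) \<Rightarrow> bool" where
  "sym_mat D B \<longleftrightarrow> (\<forall>x\<in>cube D. \<forall>y\<in>cube D. B x y = B y x)"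

end

theory Submission
  imports Defs
begin

text \<open>The entry \<open>(BA)\<^sub>x\<^sub>y\<close> sums \<open>B\<^sub>x\<^sub>u\<close> over the neighbours \<open>u\<close> of \<open>y\<close>, and \<open>(AB)\<^sub>x\<^sub>y\<close> sums
  \<open>B\<^sub>u\<^sub>y\<close> over the neighbours \<open>u\<close> of \<open>x\<close>; since \<open>B\<close> vanishes off the diagonal and the edges, only
  \<open>u \<in> {x} \<union> N(x)\<close> resp. \<open>u \<in> {y} \<union> N(y)\<close> survive. The cube has no triangles, so for an edge
  \<open>xy\<close> this leaves \<open>B\<^sub>x\<^sub>x = B\<^sub>y\<^sub>y\<close>, and connectivity makes the diagonal constant. For
  \<open>\<partial>(x,z) = 2\<close> only the two common neighbours \<open>y, w\<close> survive, giving
  \<open>B\<^sub>x\<^sub>y + B\<^sub>x\<^sub>w = B\<^sub>y\<^sub>z + B\<^sub>w\<^sub>z\<close>; the same identity for the pair \<open>(y,w)\<close>, whose common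
  neighbours are \<open>x, z\<close>, together with symmetry of \<open>B\<close> yields (ii).\<close>

definition diffs :: "bool list \<Rightarrow> bool list \<Rightarrow> nat set" where
  "diffs x y = {i. i < length x \<and> x ! i \<noteq> y ! i}"

lemma hdist_eq_card_diffs: "hdist x y = card (diffs x y)"
  by (simp add: hdist_def diffs_def)

lemma finite_diffs [simp]: "finite (diffs x y)"
  by (simp add: diffs_def)

lemma diffs_commute: "length x = length y \<Longrightarrow> diffs x y = diffs y x"
  unfolding diffs_def by auto

lemma diffs_trans:
  assumes "length x = length y" "length y = length z"
  shows "diffs x z = (diffs x y - diffs y z) \<union> (diffs y z - diffs x y)"
  using assms unfolding diffs_def by auto

lemma eq_if_diffs_eq:
  assumes "length u = length x" "length v = length x" "diffs x u = diffs x v"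
  shows "u = v"
proof (rule nth_equalityI)
  show "length u = length v" using assms by simp
  fix i assume "i < length u"
  moreover have "i \<in> diffs x u \<longleftrightarrow> i \<in> diffs x v" using assms(3) by simp
  ultimately show "u ! i = v ! i" using assms unfolding diffs_def by auto
qed

lemma finite_cube: "finite (cube D)"
  using finite_lists_length_eq[of "UNIV :: bool set" D] by (simp add: cube_def)

lemma adj_iff_diffs_singleton:
  "adj D x y \<longleftrightarrow> x \<in> cube D \<and> y \<in> cube D \<and> (\<exists>i. diffs x y = {i})"
  by (auto simp: adj_def hdist_eq_card_diffs card_1_singleton_iff)

lemma adj_imp_diffs_singleton: "adj D x y \<Longrightarrow> \<exists>i. diffs x y = {i}"
  by (simp add: adj_iff_diffs_singleton)

lemma adj_imp_length:
  assumes "adj D x y" shows "length x = D" "length y = D"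
  using assms by (auto simp: adj_def cube_def)

lemma adj_imp_cube:
  assumes "adj D x y" shows "x \<in> cube D" "y \<in> cube D"
  using assms by (simp_all add: adj_def)

lemma adj_commute: "adj D x y \<longleftrightarrow> adj D y x"
  by (auto simp: adj_def cube_def hdist_eq_card_diffs diffs_commute)

lemma hdist_eq_2_imp_not_adj: "hdist x z = 2 \<Longrightarrow> \<not> adj D x z \<and> x \<noteq> z"
  by (auto simp: adj_def hdist_def)

lemma adj_no_triangle:
  assumes "adj D x u" "adj D u y" shows "\<not> adj D x y"
proof
  assume "adj D x y"
  then obtain c where c: "diffs x y = {c}" using adj_imp_diffs_singleton by blast
  obtain a b where "diffs x u = {a}" "diffs u y = {b}"
    using adj_imp_diffs_singleton[OF assms(1)] adj_imp_diffs_singleton[OF assms(2)] by blast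
  then have "diffs x y = ({a} - {b}) \<union> ({b} - {a})"
    using diffs_trans[of x u y] adj_imp_length[OF assms(1)] adj_imp_length[OF assms(2)] by simp
  with c show False by (cases "a = b") auto
qed

lemma adj_adj_imp_diffs_subset:
  assumes "adj D x u" "adj D u z" "x \<noteq> z"
  shows "diffs x u \<subseteq> diffs x z"
proof -
  obtain a b where a: "diffs x u = {a}" and b: "diffs u z = {b}"
    using adj_imp_diffs_singleton[OF assms(1)] adj_imp_diffs_singleton[OF assms(2)] by blast
  have L: "length x = length u" "length u = length z" "length x = length z"
    using adj_imp_length assms by metis+
  have xz: "diffs x z = ({a} - {b}) \<union> ({b} - {a})"
    using diffs_trans[OF L(1,2)] a b by simp
  have "a \<noteq> b"
  proof
    assume "a = b"
    then have "diffs x z = diffs x x" using xz by (simp add: diffs_def)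
    then show False using eq_if_diffs_eq[of z x x] L assms(3) by simp
  qed
  then show ?thesis using a xz by auto
qed

lemma common_neighbours_of_dist_2:
  assumes "hdist x z = 2" "adj D x y" "adj D y z" "adj D x w" "adj D w z" "y \<noteq> w"
  shows "{u. adj D x u \<and> adj D u z} = {y, w}"
proof -
  have xz: "x \<noteq> z" using hdist_eq_2_imp_not_adj[OF assms(1)] by blast
  have len: "length x = D" "length y = D" "length w = D"
    using adj_imp_length assms(2,4) by blast+
  obtain a b where a: "diffs x y = {a}" and b: "diffs x w = {b}"
    using adj_imp_diffs_singleton[OF assms(2)] adj_imp_diffs_singleton[OF assms(4)] by blast
  have "a \<noteq> b"
  proof
    assume "a = b"
    then show False using a b eq_if_diffs_eq[of y x w] len assms(6) by simp
  qed
  then have "card {a, b} = card (diffs x z)"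
    using assms(1) by (simp add: hdist_eq_card_diffs)
  moreover have "{a, b} \<subseteq> diffs x z"
    using adj_adj_imp_diffs_subset[OF assms(2,3) xz] adj_adj_imp_diffs_subset[OF assms(4,5) xz] a b
    by simp
  ultimately have diffs_xz: "diffs x z = {a, b}"
    using card_subset_eq[OF finite_diffs] by blast
  have "u = y \<or> u = w" if u: "adj D x u" "adj D u z" for u
  proof -
    obtain c where c: "diffs x u = {c}" using adj_imp_diffs_singleton[OF u(1)] by blast
    have "length u = D" using adj_imp_length u(1) by blast
    moreover have "c = a \<or> c = b" using adj_adj_imp_diffs_subset[OF u xz] c diffs_xz by auto
    ultimately show ?thesis
      using a b c eq_if_diffs_eq[of u x y] eq_if_diffs_eq[of u x w] len by auto
  qed
  then show ?thesis using assms(2-5) by blast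
qed

lemma hdist_distinct_neighbours:
  assumes "adj D x y" "adj D x w" "y \<noteq> w"
  shows "hdist y w = 2"
proof -
  obtain a b where a: "diffs y x = {a}" and b: "diffs x w = {b}"
    using adj_imp_diffs_singleton[OF assms(1)[unfolded adj_commute[of D x]]]
      adj_imp_diffs_singleton[OF assms(2)] by blast
  have len: "length x = D" "length y = D" "length w = D"
    using adj_imp_length assms(1,2) by blast+
  have "a \<noteq> b"
  proof
    assume "a = b"
    then have "diffs x y = diffs x w" using a b diffs_commute[of y x] len by simp
    then show False using eq_if_diffs_eq[of y x w] len assms(3) by simp
  qed
  moreover have "diffs y w = ({a} - {b}) \<union> ({b} - {a})"
    using diffs_trans[of y x w] len a b by simp
  ultimately show ?thesis by (simp add: hdist_eq_card_diffs)
qed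

lemma cube_const_if_adj_eq:
  assumes adj_eq: "\<And>x y. adj D x y \<Longrightarrow> f x = f y"
    and "x \<in> cube D" "y \<in> cube D"
  shows "f x = f y"
  using assms(2,3)
proof (induction "hdist x y" arbitrary: x)
  case 0
  then have "diffs x y = diffs x x" by (simp add: hdist_eq_card_diffs diffs_def)
  then show ?case using eq_if_diffs_eq[of y x x] 0 by (simp add: cube_def)
next
  case (Suc n)
  then obtain i where i: "i \<in> diffs x y"
    by (metis card.empty equals0I hdist_eq_card_diffs nat.distinct(1))
  define x' where "x' = x[i := \<not> x ! i]"
  have i_lt: "i < length x" "x ! i \<noteq> y ! i" using i by (auto simp: diffs_def)
  have x'_cube: "x' \<in> cube D" using Suc.prems by (simp add: x'_def cube_def)
  have "diffs x x' = {i}" using i_lt by (auto simp: diffs_def x'_def nth_list_update)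
  then have "adj D x x'" using Suc.prems x'_cube by (simp add: adj_iff_diffs_singleton)
  moreover have "diffs x' y = diffs x y - {i}"
    using i_lt Suc.prems by (auto simp: diffs_def x'_def nth_list_update cube_def)
  then have "hdist x' y = n" using Suc.hyps(2) i by (simp add: hdist_eq_card_diffs)
  ultimately show ?case using Suc.hyps(1) x'_cube Suc.prems(2) adj_eq by metis
qed

lemma mat_mult_adjmat_right: "mat_mult D M (adjmat D) x y = (\<Sum>z | adj D z y. M x z)"
proof -
  have "{z. adj D z y} = {z \<in> cube D. adj D z y}" by (auto simp: adj_def)
  then show ?thesis
    by (auto simp: mat_mult_def adjmat_def sum.inter_filter[OF finite_cube] intro!: sum.cong)
qed

lemma mat_mult_adjmat_left: "mat_mult D (adjmat D) M x y = (\<Sum>z | adj D x z. M z y)"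
proof -
  have "{z. adj D x z} = {z \<in> cube D. adj D x z}" by (auto simp: adj_def)
  then show ?thesis
    by (auto simp: mat_mult_def adjmat_def sum.inter_filter[OF finite_cube] intro!: sum.cong)
qed

lemma finite_neighbours: "finite {z. adj D z y}" "finite {z. adj D x z}"
  by (auto intro: finite_subset[OF _ finite_cube] simp: adj_def)

lemma A_like_entry_identity:
  assumes "A_like D B" "x \<in> cube D" "y \<in> cube D"
  shows "(\<Sum>z | adj D z y \<and> (z = x \<or> adj D x z). B x z)
       = (\<Sum>z | adj D x z \<and> (z = y \<or> adj D z y). B z y)"
proof -
  have local: "B u v = 0" if "u \<in> cube D" "v \<in> cube D" "u \<noteq> v" "\<not> adj D u v" for u v
    using assms(1) that unfolding A_like_def by blast
  have "(\<Sum>z | adj D z y \<and> (z = x \<or> adj D x z). B x z) = (\<Sum>z | adj D z y. B x z)"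
    by (rule sum.mono_neutral_left)
      (use finite_neighbours(1) local assms(2) in \<open>auto simp: adj_def\<close>)
  also have "\<dots> = mat_mult D B (adjmat D) x y" by (simp add: mat_mult_adjmat_right)
  also have "\<dots> = mat_mult D (adjmat D) B x y" using assms unfolding A_like_def by blast
  also have "\<dots> = (\<Sum>z | adj D x z. B z y)" by (simp add: mat_mult_adjmat_left)
  also have "\<dots> = (\<Sum>z | adj D x z \<and> (z = y \<or> adj D z y). B z y)"
    by (rule sum.mono_neutral_right)
      (use finite_neighbours(2) local assms(3) in
        \<open>auto simp: adj_def adj_commute[of D x]\<close>)
  finally show ?thesis .
qed

lemma A_like_diag_eq_if_adj:
  assumes "A_like D B" "adj D x y"
  shows "B x x = B y y"
proof -
  have "{z. adj D z y \<and> (z = x \<or> adj D x z)} = {x}"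
    using assms(2) adj_no_triangle by blast
  moreover have "{z. adj D x z \<and> (z = y \<or> adj D z y)} = {y}"
    using assms(2) adj_no_triangle by blast
  ultimately show ?thesis
    using A_like_entry_identity[OF assms(1) adj_imp_cube[OF assms(2)]] by simp
qed

lemma A_like_dist_2_identity:
  assumes "A_like D B" "hdist x z = 2"
    "adj D x y" "adj D y z" "adj D x w" "adj D w z" "y \<noteq> w"
  shows "B x y + B x w = B y z + B w z"
proof -
  have common: "{u. adj D x u \<and> adj D u z} = {y, w}"
    using common_neighbours_of_dist_2 assms(2-7) .
  have "\<not> adj D x z" "x \<noteq> z" using hdist_eq_2_imp_not_adj assms(2) by blast+
  then have "{u. adj D u z \<and> (u = x \<or> adj D x u)} = {y, w}"
       and "{u. adj D x u \<and> (u = z \<or> adj D u z)} = {y, w}"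
    using common by (auto simp: adj_commute[of D z])
  then show ?thesis
    using A_like_entry_identity[OF assms(1) adj_imp_cube(1)[OF assms(3)] adj_imp_cube(2)[OF assms(4)]]
      assms(7) by simp
qed

theorem lemma8p2:
  fixes D :: nat and B :: "bool list \<Rightarrow> bool list \<Rightarrow> real"
  assumes "D \<ge> 1" and "sym_mat D B" and "A_like D B"
  shows "(\<forall>x\<in>cube D. \<forall>y\<in>cube D. B x x = B y y) \<and>
         (\<forall>x\<in>cube D. \<forall>z\<in>cube D. \<forall>y\<in>cube D. \<forall>w\<in>cube D.
            hdist x z = 2 \<and> adj D x y \<and> adj D y z \<and> adj D x w \<and> adj D w z \<and> y \<noteq> w
            \<longrightarrow> B x y = B z w \<and> B y z = B w x)"
proof (rule conjI; intro ballI impI)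
  fix x y assume "x \<in> cube D" "y \<in> cube D"
  then show "B x x = B y y"
    using cube_const_if_adj_eq[of D "\<lambda>x. B x x"] A_like_diag_eq_if_adj[OF assms(3)] by blast
next
  fix x z y w
  assume "x \<in> cube D" "z \<in> cube D" "y \<in> cube D" "w \<in> cube D"
    and h: "hdist x z = 2 \<and> adj D x y \<and> adj D y z \<and> adj D x w \<and> adj D w z \<and> y \<noteq> w"
  then have sym: "B y x = B x y" "B w z = B z w" "B w x = B x w"
    using assms(2) unfolding sym_mat_def by auto
  have xz: "x \<noteq> z" using h hdist_eq_2_imp_not_adj by blast
  have "B x y + B x w = B y z + B w z"
    using A_like_dist_2_identity[OF assms(3)] h by blast
  moreover have "B y x + B y z = B x w + B z w"
    using A_like_dist_2_identity[OF assms(3) hdist_distinct_neighbours[of D x y w]] h xz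
    by (simp add: adj_commute)
  ultimately show "B x y = B z w \<and> B y z = B w x" using sym by linarith
qed

end
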